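(* Let $Z=Z(P)$ be a fake weighted projective plane, with $\operatorname{Cl}(Z)\cong\mathbb{Z}\times\mathbb{Z}/n\mathbb{Z}$ and $w_0,w_1,w_2$ as in the context. Then there exists an integer $0\le x<nw_2$ with $\gcd(x,nw_2)=1$ such that $Z(P)\cong Z(P')$, where \[ P'=\begin{bmatrix}1 & x & -\frac{w_0+xw_1}{w_2}\\ 0 & nw_2 & -nw_1\end{bmatrix}. \]
   Context: Ground field algebraically closed of characteristic zero. For an integral $2\times3$ matrix $P=[v_0\ v_1\ v_2]$ with primitive columns generating $\mathbb{Q}^2$ as a convex cone, $Z(P)$ denotes the toric surface of the unique complete fan in $\mathbb{Z}^2$ with rays through $v_0,v_1,v_2$ (a fake weighted projective plane). Under a splitting $\operatorname{Cl}(Z)\cong\mathbb{Z}\times\mathbb{Z}/n\mathbb{Z}$, write $[D_i]=(w_i,\eta_i)$ for the invariant prime divisor $D_i$ of $v_i$, with the splitting chosen so that $w_i>0$. *)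

theory Defs
  imports Main "HOL.Rat"
begin

text \<open>An integral 2x3 matrix P is represented by its columns P 0, P 1, P 2 :: int \<times> int
  (values at indices \<ge> 3 are irrelevant).\<close>

definition primitive_vec :: "int \<times> int \<Rightarrow> bool" where
  "primitive_vec v \<longleftrightarrow> gcd (fst v) (snd v) = 1"

definition cone_generates_Q2 :: "(nat \<Rightarrow> int \<times> int) \<Rightarrow> bool" where
  "cone_generates_Q2 P \<longleftrightarrow>
     (\<forall>x y :: rat. \<exists>c :: nat \<Rightarrow> rat. (\<forall>i<3. c i \<ge> 0) \<and>
        x = (\<Sum>i<3. c i * of_int (fst (P i))) \<and>
        y = (\<Sum>i<3. c i * of_int (snd (P i))))"

definition fwpp_matrix :: "(nat \<Rightarrow> int \<times> int) \<Rightarrow> bool" where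
  "fwpp_matrix P \<longleftrightarrow> (\<forall>i<3. primitive_vec (P i)) \<and> cone_generates_Q2 P"

definition pair_int :: "int \<times> int \<Rightarrow> int \<times> int \<Rightarrow> int" where
  "pair_int u v = fst u * fst v + snd u * snd v"

text \<open>Principal invariant divisor div(chi^u) = sum_i <u,v_i> D_i, as an element of Z^3.\<close>
definition princ_div :: "(nat \<Rightarrow> int \<times> int) \<Rightarrow> int \<times> int \<Rightarrow> int \<times> int \<times> int" where
  "princ_div P u = (pair_int u (P 0), pair_int u (P 1), pair_int u (P 2))"

text \<open>The map Z^3 = WDiv^T(Z) -> Z x Z/nZ sending D_i to (w_i, eta_i mod n);
  Z/nZ is represented by the residues {0..<n}.\<close>
definition cl_class :: "(nat \<Rightarrow> int) \<Rightarrow> (nat \<Rightarrow> int) \<Rightarrow> int \<Rightarrow> int \<times> int \<times> int \<Rightarrow> int \<times> int" where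
  "cl_class w \<eta> n a = (case a of (a0, a1, a2) \<Rightarrow>
      (a0 * w 0 + a1 * w 1 + a2 * w 2, (a0 * \<eta> 0 + a1 * \<eta> 1 + a2 * \<eta> 2) mod n))"

text \<open>A splitting Cl(Z(P)) = Z^3 / principal divisors \<cong> Z x Z/nZ with [D_i] = (w_i, eta_i):
  the induced map is surjective with kernel exactly the principal divisors.\<close>
definition cl_splitting :: "(nat \<Rightarrow> int \<times> int) \<Rightarrow> int \<Rightarrow> (nat \<Rightarrow> int) \<Rightarrow> (nat \<Rightarrow> int) \<Rightarrow> bool" where
  "cl_splitting P n w \<eta> \<longleftrightarrow> n \<ge> 1 \<and>
     range (cl_class w \<eta> n) = UNIV \<times> {0..<n} \<and>
     {a. cl_class w \<eta> n a = (0, 0)} = range (princ_div P)"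

definition lin2 :: "int \<times> int \<times> int \<times> int \<Rightarrow> int \<times> int \<Rightarrow> int \<times> int" where
  "lin2 A v = (case A of (a, b, c, d) \<Rightarrow> (a * fst v + b * snd v, c * fst v + d * snd v))"

text \<open>Z(P) \<cong> Z(Q): a lattice automorphism A in GL(2,Z) mapping the rays (columns) of P
  bijectively onto the rays of Q, i.e. an isomorphism of the fans.\<close>
definition toric_iso :: "(nat \<Rightarrow> int \<times> int) \<Rightarrow> (nat \<Rightarrow> int \<times> int) \<Rightarrow> bool" where
  "toric_iso P Q \<longleftrightarrow> (\<exists>a b c d. (a * d - b * c = 1 \<or> a * d - b * c = -1) \<and>
     (\<exists>\<sigma>. bij_betw \<sigma> {0..<3} {0..<3} \<and> (\<forall>i<3. lin2 (a, b, c, d) (P i) = Q (\<sigma> i))))"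

definition normal_form_matrix :: "int \<Rightarrow> int \<Rightarrow> int \<Rightarrow> int \<Rightarrow> int \<Rightarrow> nat \<Rightarrow> int \<times> int" where
  "normal_form_matrix n w0 w1 w2 x = (\<lambda>i. if i = 0 then (1, 0)
      else if i = 1 then (x, n * w2)
      else (- ((w0 + x * w1) div w2), - n * w1))"

end

theory Submission
  imports Defs
begin

text \<open>Principal divisors have class zero, so w 0 v 0 + w 1 v 1 + w 2 v 2 = 0, and the
  divisor n w 2 D 1 - n w 1 D 2, being of class zero, is principal; this forces
  det (v 0, v 1) to divide n w 2. Conversely every class with w-component in [0, w 2) is
  the class of j D 1 + c D 2 with 0 \<le> j < |det (v 0, v 1)|, so n w 2 \<le> |det (v 0, v 1)|.
  Hence |det (v 0, v 1)| = n w 2, and the Hermite normal form of the primitive vector v 0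
  next to v 1 gives a unimodular map sending v 0 to (1, 0) and v 1 to (x, n w 2) with
  0 \<le> x < n w 2; x is coprime to n w 2 because v 1 is primitive, and the weight relation
  determines the image of v 2.\<close>

definition det2 :: "int \<times> int \<Rightarrow> int \<times> int \<Rightarrow> int" where
  "det2 u v = fst u * snd v - snd u * fst v"

definition unimodular :: "int \<times> int \<times> int \<times> int \<Rightarrow> bool" where
  "unimodular A \<longleftrightarrow> (case A of (a, b, c, d) \<Rightarrow> a * d - b * c = 1 \<or> a * d - b * c = -1)"

lemma pair_int_lin2: "pair_int u (lin2 (a, b, c, d) v) = pair_int (lin2 (a, c, b, d) u) v"
  by (simp add: lin2_def pair_int_def algebra_simps)

lemma primitive_vec_lin2:
  assumes "unimodular A" and "primitive_vec v"
  shows "primitive_vec (lin2 A v)"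
proof -
  obtain a b c d where A: "A = (a, b, c, d)" by (metis prod.exhaust)
  obtain p q where v: "v = (p, q)" by (metis prod.exhaust)
  let ?g = "gcd (a * p + b * q) (c * p + d * q)"
  have "(a * d - b * c) * p = d * (a * p + b * q) - b * (c * p + d * q)"
    and "(a * d - b * c) * q = a * (c * p + d * q) - c * (a * p + b * q)"
    by (simp_all add: algebra_simps)
  then have "?g dvd (a * d - b * c) * p" and "?g dvd (a * d - b * c) * q"
    by simp_all
  moreover have "a * d - b * c = 1 \<or> a * d - b * c = -1"
    using assms(1) A by (simp add: unimodular_def)
  ultimately have "?g dvd gcd p q"
    by auto
  then have "?g dvd 1"
    using assms(2) by (simp only: primitive_vec_def v fst_conv snd_conv)
  then have "?g = 1"
    by (simp add: zdvd1_eq)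
  then show ?thesis
    by (simp add: primitive_vec_def A v lin2_def)
qed

lemma det2_dvd_of_dual:
  assumes "primitive_vec v0" and "pair_int u v0 = 0" and "pair_int u v1 = N"
  shows "det2 v0 v1 dvd N"
proof -
  obtain a b where v0: "v0 = (a, b)" by (metis prod.exhaust)
  obtain c d where v1: "v1 = (c, d)" by (metis prod.exhaust)
  obtain p q where u: "u = (p, q)" by (metis prod.exhaust)
  have 0: "p * a + q * b = 0" and N: "p * c + q * d = N"
    using assms(2,3) by (simp_all add: pair_int_def v0 v1 u)
  have "q * (a * d - b * c) = a * (p * c + q * d) - c * (p * a + q * b)"
    by (simp add: algebra_simps)
  then have "q * (a * d - b * c) = N * a"
    unfolding 0 N by simp
  then have dvd_a: "(a * d - b * c) dvd N * a"
    by (metis dvd_triv_right)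
  have "- p * (a * d - b * c) = b * (p * c + q * d) - d * (p * a + q * b)"
    by (simp add: algebra_simps)
  then have "- p * (a * d - b * c) = N * b"
    unfolding 0 N by simp
  then have "(a * d - b * c) dvd N * b"
    by (metis dvd_triv_right)
  with dvd_a have "(a * d - b * c) dvd gcd (N * a) (N * b)"
    by simp
  also have "gcd (N * a) (N * b) = \<bar>N\<bar>"
    using assms(1) by (simp add: primitive_vec_def v0 gcd_mult_distrib_int[symmetric])
  finally show ?thesis
    by (simp add: det2_def v0 v1)
qed

lemma exists_dual_vector_in_window:
  assumes "primitive_vec v0" and "det2 v0 v1 \<noteq> 0"
  shows "\<exists>u. pair_int u v0 = a0 \<and> r \<le> pair_int u v1 \<and> pair_int u v1 < r + \<bar>det2 v0 v1\<bar>"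
proof -
  obtain a b where v0: "v0 = (a, b)" by (metis prod.exhaust)
  obtain s t where st: "s * a + t * b = 1"
    using assms(1) bezout_int[of a b] by (auto simp: primitive_vec_def v0)
  define E where "E = \<bar>det2 v0 v1\<bar>"
  define y where "y = pair_int (a0 * s, a0 * t) v1"
  define k where "k = (y - r) div E"
  have sgn_det: "sgn (det2 v0 v1) * det2 v0 v1 = E"
    by (simp add: E_def abs_sgn)
  \<comment> \<open>(b, - a) is orthogonal to v0 and pairs with v1 to - det2 v0 v1\<close>
  define u where "u = (a0 * s + k * sgn (det2 v0 v1) * b, a0 * t - k * sgn (det2 v0 v1) * a)"
  have "pair_int u v0 = a0 * (s * a + t * b)"
    by (simp add: u_def v0 pair_int_def algebra_simps)
  moreover have "pair_int u v1 = y - k * (sgn (det2 v0 v1) * det2 v0 v1)"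
    by (simp add: u_def y_def v0 pair_int_def det2_def algebra_simps)
  then have "pair_int u v1 = r + (y - r) mod E"
    unfolding sgn_det k_def by (simp add: minus_div_mult_eq_mod[symmetric])
  moreover have "0 < E"
    using assms(2) by (simp add: E_def)
  ultimately show ?thesis
    using st by (intro exI[of _ u]) (simp add: E_def)
qed

lemma unimodular_hermite_normal_form:
  assumes "primitive_vec v0" and "det2 v0 v1 \<noteq> 0"
  obtains A x where "unimodular A" and "lin2 A v0 = (1, 0)" and "lin2 A v1 = (x, \<bar>det2 v0 v1\<bar>)"
    and "0 \<le> x" and "x < \<bar>det2 v0 v1\<bar>"
proof -
  obtain p q where u: "pair_int (p, q) v0 = 1" "0 \<le> pair_int (p, q) v1"
    "pair_int (p, q) v1 < \<bar>det2 v0 v1\<bar>"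
    using exists_dual_vector_in_window[OF assms, of 1 0] by auto
  obtain a b where v0: "v0 = (a, b)" by (metis prod.exhaust)
  define \<epsilon> where "\<epsilon> = sgn (det2 v0 v1)"
  define A where "A = (p, q, - \<epsilon> * b, \<epsilon> * a)"
  have "p * (\<epsilon> * a) - q * (- \<epsilon> * b) = \<epsilon> * pair_int (p, q) v0"
    by (simp add: v0 pair_int_def algebra_simps)
  then have "unimodular A"
    using assms(2) u(1) by (auto simp: unimodular_def A_def \<epsilon>_def sgn_if)
  moreover have "lin2 A v0 = (1, 0)"
    using u(1) by (simp add: A_def lin2_def v0 pair_int_def algebra_simps)
  moreover have "lin2 A v1 = (pair_int (p, q) v1, \<epsilon> * det2 v0 v1)"
    by (simp add: A_def lin2_def v0 pair_int_def det2_def algebra_simps)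
  ultimately show ?thesis
    using that u(2,3) by (simp add: \<epsilon>_def abs_sgn mult.commute)
qed

lemma cl_splitting_weighted_sum:
  assumes "cl_splitting P n w \<eta>"
  shows "w 0 * pair_int u (P 0) + w 1 * pair_int u (P 1) + w 2 * pair_int u (P 2) = 0"
    and "(\<eta> 0 * pair_int u (P 0) + \<eta> 1 * pair_int u (P 1) + \<eta> 2 * pair_int u (P 2)) mod n = 0"
proof -
  have "cl_class w \<eta> n (princ_div P u) = (0, 0)"
    using assms unfolding cl_splitting_def by blast
  then show "w 0 * pair_int u (P 0) + w 1 * pair_int u (P 1) + w 2 * pair_int u (P 2) = 0"
    and "(\<eta> 0 * pair_int u (P 0) + \<eta> 1 * pair_int u (P 1) + \<eta> 2 * pair_int u (P 2)) mod n = 0"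
    by (simp_all add: princ_div_def cl_class_def algebra_simps)
qed

lemma cl_splitting_weighted_sum_lin2:
  assumes "cl_splitting P n w \<eta>"
  shows "w 0 * pair_int u (lin2 A (P 0)) + w 1 * pair_int u (lin2 A (P 1))
    + w 2 * pair_int u (lin2 A (P 2)) = 0"
proof -
  obtain a b c d where A: "A = (a, b, c, d)"
    by (metis prod.exhaust)
  show ?thesis
    using cl_splitting_weighted_sum(1)[OF assms, of "lin2 (a, c, b, d) u"]
    by (simp add: A pair_int_lin2)
qed

lemma cl_class_diff_princ_div:
  assumes "cl_splitting P n w \<eta>"
  shows "cl_class w \<eta> n (a0 - pair_int u (P 0), a1 - pair_int u (P 1), a2 - pair_int u (P 2))
    = cl_class w \<eta> n (a0, a1, a2)"
proof -
  let ?p = "\<lambda>i. pair_int u (P i)"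
  have "(a0 - ?p 0) * w 0 + (a1 - ?p 1) * w 1 + (a2 - ?p 2) * w 2
      = (a0 * w 0 + a1 * w 1 + a2 * w 2) - (w 0 * ?p 0 + w 1 * ?p 1 + w 2 * ?p 2)"
    by (simp add: algebra_simps)
  moreover have "(a0 - ?p 0) * \<eta> 0 + (a1 - ?p 1) * \<eta> 1 + (a2 - ?p 2) * \<eta> 2
      = (a0 * \<eta> 0 + a1 * \<eta> 1 + a2 * \<eta> 2) - (\<eta> 0 * ?p 0 + \<eta> 1 * ?p 1 + \<eta> 2 * ?p 2)"
    by (simp add: algebra_simps)
  ultimately show ?thesis
    using cl_splitting_weighted_sum[OF assms, of u]
    by (simp add: cl_class_def mod_diff_right_eq[symmetric])
qed

lemma cl_splitting_det2_dvd:
  assumes "cl_splitting P n w \<eta>" and "primitive_vec (P 0)"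
  shows "det2 (P 0) (P 1) dvd n * w 2"
proof -
  have "cl_class w \<eta> n (0, n * w 2, - n * w 1) = (0, 0)"
    by (simp add: cl_class_def algebra_simps)
  then have "(0, n * w 2, - n * w 1) \<in> range (princ_div P)"
    using assms(1) unfolding cl_splitting_def by blast
  then obtain u where "princ_div P u = (0, n * w 2, - n * w 1)"
    by auto
  then have "pair_int u (P 0) = 0" and "pair_int u (P 1) = n * w 2"
    by (simp_all add: princ_div_def)
  then show ?thesis
    by (rule det2_dvd_of_dual[OF assms(2)])
qed

lemma div_eq_minus_if_bounds:
  fixes k c m :: int
  assumes "0 \<le> k + c * m" and "k + c * m < m"
  shows "k div m = - c"
proof -
  have "0 < m"
    using assms by linarith
  then have "(k + c * m) div m = c + k div m"
    by simp
  moreover have "(k + c * m) div m = 0"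
    using assms by (rule div_pos_pos_trivial)
  ultimately show ?thesis
    by linarith
qed

lemma cl_splitting_le_abs_det2:
  assumes "cl_splitting P n w \<eta>" and "primitive_vec (P 0)" and "det2 (P 0) (P 1) \<noteq> 0"
    and "0 < w 2"
  shows "n * w 2 \<le> \<bar>det2 (P 0) (P 1)\<bar>"
proof -
  define E where "E = \<bar>det2 (P 0) (P 1)\<bar>"
  \<comment> \<open>the class of j D 1 moved by a multiple of D 2 into w-component [0, w 2)\<close>
  define f where "f j = cl_class w \<eta> n (0, j, - (j * w 1 div w 2))" for j
  have "{0..<w 2} \<times> {0..<n} \<subseteq> f ` {0..<E}"
  proof
    fix z
    assume z: "z \<in> {0..<w 2} \<times> {0..<n}"
    then have "z \<in> range (cl_class w \<eta> n)"
      using assms(1) unfolding cl_splitting_def by auto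
    then obtain a0 a1 a2 where a: "cl_class w \<eta> n (a0, a1, a2) = z"
      by (metis prod_cases3 rangeE)
    obtain u where u: "pair_int u (P 0) = a0" "a1 - E + 1 \<le> pair_int u (P 1)"
      "pair_int u (P 1) < a1 + 1"
      using exists_dual_vector_in_window[OF assms(2,3), of a0 "a1 - E + 1"] by (auto simp: E_def)
    define j where "j = a1 - pair_int u (P 1)"
    have "cl_class w \<eta> n (0, j, a2 - pair_int u (P 2)) = z"
      using cl_class_diff_princ_div[OF assms(1), of a0 u a1 a2] a u(1) by (simp add: j_def)
    moreover from this z have "j * w 1 div w 2 = - (a2 - pair_int u (P 2))"
      using assms(4) by (intro div_eq_minus_if_bounds) (auto simp: cl_class_def)
    ultimately have "f j = z"
      by (simp add: f_def)
    moreover have "j \<in> {0..<E}"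
      using u by (simp add: j_def)
    ultimately show "z \<in> f ` {0..<E}"
      by blast
  qed
  then have "card ({0..<w 2} \<times> {0..<n}) \<le> card (f ` {0..<E})"
    by (intro card_mono) auto
  also have "\<dots> \<le> card {0..<E}"
    by (rule card_image_le) simp
  finally have "nat (n * w 2) \<le> nat E"
    using assms(1,4) by (simp add: cl_splitting_def nat_mult_distrib mult.commute)
  then show ?thesis
    by (simp add: E_def)
qed

lemma cl_splitting_abs_det2:
  assumes "cl_splitting P n w \<eta>" and "primitive_vec (P 0)" and "0 < w 2"
  shows "\<bar>det2 (P 0) (P 1)\<bar> = n * w 2"
proof -
  have pos: "0 < n * w 2"
    using assms(1,3) by (simp add: cl_splitting_def)
  have dvd: "det2 (P 0) (P 1) dvd n * w 2"
    using assms(1,2) by (rule cl_splitting_det2_dvd)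
  have "n * w 2 \<noteq> 0"
    using pos by linarith
  then have "\<bar>det2 (P 0) (P 1)\<bar> \<le> n * w 2"
    using dvd_imp_le_int[OF _ dvd] pos by simp
  moreover have "det2 (P 0) (P 1) \<noteq> 0"
    using dvd pos by auto
  ultimately show ?thesis
    using cl_splitting_le_abs_det2[OF assms(1,2) _ assms(3)] by simp
qed

lemma weight_relation_third_column:
  fixes w0 w1 w2 x n :: int
  assumes "0 < w2"
    and "\<And>u. w0 * pair_int u (1, 0) + w1 * pair_int u (x, n * w2) + w2 * pair_int u v = 0"
  shows "w2 dvd w0 + x * w1" and "v = (- ((w0 + x * w1) div w2), - n * w1)"
proof -
  obtain e f where v: "v = (e, f)"
    by (metis prod.exhaust)
  have e: "w0 + x * w1 = w2 * - e"
    using assms(2)[of "(1, 0)"] by (simp add: pair_int_def v algebra_simps)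
  have "w2 * f = w2 * (- n * w1)"
    using assms(2)[of "(0, 1)"] by (simp add: pair_int_def v algebra_simps)
  then have "f = - n * w1"
    using assms(1) by (metis mult_cancel_left less_irrefl)
  moreover have "(w0 + x * w1) div w2 = - e"
    unfolding e by (rule nonzero_mult_div_cancel_left) (use assms(1) in linarith)
  ultimately show "v = (- ((w0 + x * w1) div w2), - n * w1)"
    by (simp add: v)
  from e show "w2 dvd w0 + x * w1"
    by simp
qed

lemma toric_iso_if_lin2:
  assumes "unimodular A" and "\<And>i. i < 3 \<Longrightarrow> lin2 A (P i) = Q i"
  shows "toric_iso P Q"
proof -
  obtain a b c d where A: "A = (a, b, c, d)"
    by (metis prod.exhaust)
  show ?thesis
    unfolding toric_iso_def
  proof (intro exI conjI)
    show "a * d - b * c = 1 \<or> a * d - b * c = -1"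
      using assms(1) by (simp add: unimodular_def A)
    show "bij_betw id {0..<3::nat} {0..<3}"
      by simp
    show "\<forall>i<3. lin2 (a, b, c, d) (P i) = Q (id i)"
      using assms(2) by (simp add: A)
  qed
qed

lemma toric_iso_normal_form_matrix:
  assumes "unimodular A" and "lin2 A (P 0) = (1, 0)" and "lin2 A (P 1) = (x, n * w2)"
    and "lin2 A (P 2) = (- ((w0 + x * w1) div w2), - n * w1)"
  shows "toric_iso P (normal_form_matrix n w0 w1 w2 x)"
proof (rule toric_iso_if_lin2[OF assms(1)])
  fix i :: nat
  assume "i < 3"
  then consider "i = 0" | "i = 1" | "i = 2"
    by linarith
  then show "lin2 A (P i) = normal_form_matrix n w0 w1 w2 x i"
    by cases (use assms(2-4) in \<open>simp_all add: normal_form_matrix_def\<close>)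
qed

theorem proposition8p3:
  fixes P :: "nat \<Rightarrow> int \<times> int" and n :: int and w \<eta> :: "nat \<Rightarrow> int"
  assumes "fwpp_matrix P"
    and "cl_splitting P n w \<eta>"
    and "\<forall>i<3. w i > 0"
  shows "\<exists>x :: int. 0 \<le> x \<and> x < n * w 2 \<and> gcd x (n * w 2) = 1 \<and>
           w 2 dvd (w 0 + x * w 1) \<and>
           toric_iso P (normal_form_matrix n (w 0) (w 1) (w 2) x)"
proof -
  have prim: "primitive_vec (P 0)" "primitive_vec (P 1)"
    using assms(1) by (simp_all add: fwpp_matrix_def)
  have w2: "0 < w 2"
    using assms(3) by simp
  have det: "\<bar>det2 (P 0) (P 1)\<bar> = n * w 2"
    using assms(2) prim(1) w2 by (rule cl_splitting_abs_det2)
  moreover have "det2 (P 0) (P 1) \<noteq> 0"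
    using det assms(2) w2 by (auto simp: cl_splitting_def)
  ultimately obtain A x where A: "unimodular A" "lin2 A (P 0) = (1, 0)" "lin2 A (P 1) = (x, n * w 2)"
    and x: "0 \<le> x" "x < n * w 2"
    using unimodular_hermite_normal_form[OF prim(1)] by metis
  have coprime: "gcd x (n * w 2) = 1"
    using primitive_vec_lin2[OF A(1) prim(2)] unfolding A(3) primitive_vec_def by simp
  have "w 0 * pair_int u (1, 0) + w 1 * pair_int u (x, n * w 2) + w 2 * pair_int u (lin2 A (P 2)) = 0"
    for u
    using cl_splitting_weighted_sum_lin2[OF assms(2), of u A] unfolding A(2,3) .
  then have dvd: "w 2 dvd w 0 + x * w 1"
    and P2: "lin2 A (P 2) = (- ((w 0 + x * w 1) div w 2), - n * w 1)"
    using weight_relation_third_column[OF w2] by blast+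
  have "toric_iso P (normal_form_matrix n (w 0) (w 1) (w 2) x)"
    using A P2 by (rule toric_iso_normal_form_matrix)
  with x coprime dvd show ?thesis
    by (intro exI[of _ x] conjI)
qed

end
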